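(* Let $n\ge1$ and $d\ge1$, and let $w$ be a positive weight vector. Then there is a design $D\subset\mathbb{R}^d$ with $n$ points which minimises $A(w,L)$ among all designs of sample size $n$ and their identifiable staircases; more precisely, the quantity $$A^*(w,n)=\min_{D:\,|D|=n}\ \min_{L\in\mathcal{L}_a(D)}A(w,L)$$ is achieved by a generic design.
   Context: A design $D\subset\mathbb{R}^d$ is a finite set of $n=|D|$ distinct points. A model basis is a finite set $L\subset\mathbb{Z}^d_{\ge 0}$; it is identifiable by $D$ if $|L|=n$ and the matrix $[x^\alpha]_{x\in D,\alpha\in L}$ (with $x^\alpha=\prod_i x_i^{\alpha_i}$) is invertible. $L$ is a staircase if $\alpha\in L$, $\beta\le\alpha$ componentwise imply $\beta\in L$. The aberration is $A(w,L)=\frac1n\sum_{\alpha\in L}\sum_{i=1}^dw_i\alpha_i$. For a term ordering $\succ$, $L(D,\succ)$ is the set of exponents of monomials not divisible by leading terms of elements of the ideal $I(D)$ of polynomials vanishing on $D$; the algebraic fan is $\mathcal{L}_a(D)=\{L(D,\succ):\succ\text{ a term ordering}\}$. A staircase $L$ with $|L|=n$ is a corner cut if some affine hyperplane in $\mathbb{R}^d$ strictly separates $L$ from $\mathbb{Z}^d_{\ge0}\setminus L$. A design with $n$ points is generic if every corner cut staircase of size $n$ in $d$ dimensions is identifiable by it. *)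

theory Defs
  imports Complex_Main
begin

text \<open>Dimension d is the cardinality of a finite index type 'd.
  Points of R^d are functions 'd => real, exponent vectors in Z^d_{>=0} are
  functions 'd => nat (ordered componentwise by the pointwise function order).
  A polynomial in d variables with real coefficients is a finitely supported
  coefficient function from exponent vectors to reals.\<close>

definition mono :: "('d::finite \<Rightarrow> real) \<Rightarrow> ('d \<Rightarrow> nat) \<Rightarrow> real" where
  "mono x \<alpha> = (\<Prod>i\<in>UNIV. x i ^ \<alpha> i)"

definition supp :: "(('d::finite \<Rightarrow> nat) \<Rightarrow> real) \<Rightarrow> ('d \<Rightarrow> nat) set" where
  "supp p = {\<alpha>. p \<alpha> \<noteq> 0}"

definition is_poly :: "(('d::finite \<Rightarrow> nat) \<Rightarrow> real) \<Rightarrow> bool" where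
  "is_poly p \<longleftrightarrow> finite (supp p)"

definition poly_eval :: "(('d::finite \<Rightarrow> nat) \<Rightarrow> real) \<Rightarrow> ('d \<Rightarrow> real) \<Rightarrow> real" where
  "poly_eval p x = (\<Sum>\<alpha>\<in>supp p. p \<alpha> * mono x \<alpha>)"

definition vanishing_ideal :: "('d::finite \<Rightarrow> real) set \<Rightarrow> (('d \<Rightarrow> nat) \<Rightarrow> real) set" where
  "vanishing_ideal D = {p. is_poly p \<and> (\<forall>x\<in>D. poly_eval p x = 0)}"

definition term_order :: "(('d::finite \<Rightarrow> nat) \<Rightarrow> ('d \<Rightarrow> nat) \<Rightarrow> bool) \<Rightarrow> bool" where
  "term_order le \<longleftrightarrow>
     (\<forall>\<alpha>. le \<alpha> \<alpha>) \<and>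
     (\<forall>\<alpha> \<beta>. le \<alpha> \<beta> \<and> le \<beta> \<alpha> \<longrightarrow> \<alpha> = \<beta>) \<and>
     (\<forall>\<alpha> \<beta> \<gamma>. le \<alpha> \<beta> \<and> le \<beta> \<gamma> \<longrightarrow> le \<alpha> \<gamma>) \<and>
     (\<forall>\<alpha> \<beta>. le \<alpha> \<beta> \<or> le \<beta> \<alpha>) \<and>
     (\<forall>\<alpha>. le (\<lambda>_. 0) \<alpha>) \<and>
     (\<forall>\<alpha> \<beta> \<gamma>. le \<alpha> \<beta> \<longrightarrow> le (\<lambda>i. \<alpha> i + \<gamma> i) (\<lambda>i. \<beta> i + \<gamma> i))"

definition is_leading_exp ::
  "(('d::finite \<Rightarrow> nat) \<Rightarrow> ('d \<Rightarrow> nat) \<Rightarrow> bool) \<Rightarrow> (('d \<Rightarrow> nat) \<Rightarrow> real) \<Rightarrow> ('d \<Rightarrow> nat) \<Rightarrow> bool" where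
  "is_leading_exp le p \<beta> \<longleftrightarrow> p \<beta> \<noteq> 0 \<and> (\<forall>\<gamma>. p \<gamma> \<noteq> 0 \<longrightarrow> le \<gamma> \<beta>)"

text \<open>L(D,>): exponents of monomials not divisible by any leading term of a
  (nonzero) element of I(D). Divisibility x^beta | x^alpha is beta \<le> alpha componentwise.\<close>
definition std_exps ::
  "('d::finite \<Rightarrow> real) set \<Rightarrow> (('d \<Rightarrow> nat) \<Rightarrow> ('d \<Rightarrow> nat) \<Rightarrow> bool) \<Rightarrow> ('d \<Rightarrow> nat) set" where
  "std_exps D le = {\<alpha>. \<not> (\<exists>p\<in>vanishing_ideal D. \<exists>\<beta>. is_leading_exp le p \<beta> \<and> \<beta> \<le> \<alpha>)}"

definition alg_fan :: "('d::finite \<Rightarrow> real) set \<Rightarrow> ('d \<Rightarrow> nat) set set" where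
  "alg_fan D = {std_exps D le | le. term_order le}"

definition aberration :: "nat \<Rightarrow> ('d::finite \<Rightarrow> real) \<Rightarrow> ('d \<Rightarrow> nat) set \<Rightarrow> real" where
  "aberration n w L = (1 / real n) * (\<Sum>\<alpha>\<in>L. \<Sum>i\<in>UNIV. w i * real (\<alpha> i))"

definition staircase :: "('d::finite \<Rightarrow> nat) set \<Rightarrow> bool" where
  "staircase L \<longleftrightarrow> (\<forall>\<alpha>\<in>L. \<forall>\<beta>. \<beta> \<le> \<alpha> \<longrightarrow> \<beta> \<in> L)"

text \<open>L is identifiable by D: |L| = |D| and the square matrix [x^alpha]_{x in D, alpha in L}
  is invertible, i.e. (being square) its columns are linearly independent.\<close>
definition identifiable :: "('d::finite \<Rightarrow> real) set \<Rightarrow> ('d \<Rightarrow> nat) set \<Rightarrow> bool" where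
  "identifiable D L \<longleftrightarrow> finite D \<and> finite L \<and> card L = card D \<and>
     (\<forall>c :: ('d \<Rightarrow> nat) \<Rightarrow> real.
        (\<forall>x\<in>D. (\<Sum>\<alpha>\<in>L. c \<alpha> * mono x \<alpha>) = 0) \<longrightarrow> (\<forall>\<alpha>\<in>L. c \<alpha> = 0))"

definition corner_cut :: "nat \<Rightarrow> ('d::finite \<Rightarrow> nat) set \<Rightarrow> bool" where
  "corner_cut n L \<longleftrightarrow> staircase L \<and> finite L \<and> card L = n \<and>
     (\<exists>(c :: 'd \<Rightarrow> real) (b :: real).
        ((\<forall>\<alpha>\<in>L. (\<Sum>i\<in>UNIV. c i * real (\<alpha> i)) < b) \<and>
         (\<forall>\<alpha>. \<alpha> \<notin> L \<longrightarrow> (\<Sum>i\<in>UNIV. c i * real (\<alpha> i)) > b)) \<or>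
        ((\<forall>\<alpha>\<in>L. (\<Sum>i\<in>UNIV. c i * real (\<alpha> i)) > b) \<and>
         (\<forall>\<alpha>. \<alpha> \<notin> L \<longrightarrow> (\<Sum>i\<in>UNIV. c i * real (\<alpha> i)) < b)))"

definition generic :: "('d::finite \<Rightarrow> real) set \<Rightarrow> bool" where
  "generic D \<longleftrightarrow> (\<forall>L. corner_cut (card D) L \<longrightarrow> identifiable D L)"

end

theory Submission
  imports Defs "HOL-Library.Function_Algebras" "HOL-Library.Product_Lexorder"
    "HOL-Computational_Algebra.Polynomial" "HOL-Computational_Algebra.Primes"
begin

text \<open>
  For every term ordering the standard monomials of a design with n points form a basis of the
  functions on the design, so every L in the algebraic fan has exactly n elements. Hence an
  aberration-minimal choice is the set of n exponents of least weight, provided some design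
  realises it. Order the exponents by weight, breaking ties by the injective code
  alpha \<mapsto> \<Prod>i p_i^alpha_i with distinct primes p_i; the first n exponents S form an order
  ideal of this term ordering. The design x_j = (p_i^j)_i, j < n, turns every monomial matrix
  into a Vandermonde matrix with distinct nodes p^alpha, so every n-element L is identifiable:
  the design is generic, and S is its set of standard exponents.
\<close>

section \<open>Term orderings\<close>

context
  fixes le :: "('d::finite \<Rightarrow> nat) \<Rightarrow> ('d \<Rightarrow> nat) \<Rightarrow> bool"
  assumes term_order: "term_order le"
begin

lemma term_order_refl: "le a a"
  using term_order unfolding term_order_def by blast

lemma term_order_antisym: "le a b \<Longrightarrow> le b a \<Longrightarrow> a = b"
  using term_order unfolding term_order_def by blast

lemma term_order_trans: "le a b \<Longrightarrow> le b c \<Longrightarrow> le a c"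
  using term_order unfolding term_order_def by blast

lemma term_order_linear: "le a b \<or> le b a"
  using term_order unfolding term_order_def by blast

lemma term_order_add: "le a b \<Longrightarrow> le (\<lambda>i. a i + c i) (\<lambda>i. b i + c i)"
  using term_order unfolding term_order_def by blast

lemma term_order_zero: "le (\<lambda>_. 0) a"
  using term_order unfolding term_order_def by blast

lemma term_order_mono:
  assumes "a \<le> b"
  shows "le a b"
proof -
  have "le (\<lambda>i. 0 + a i) (\<lambda>i. (b i - a i) + a i)"
    using term_order_add[OF term_order_zero] by simp
  moreover have "(\<lambda>i. (b i - a i) + a i) = b"
    using assms by (auto simp: le_fun_def)
  ultimately show ?thesis by simp
qed

lemma term_order_finite_max:
  assumes "finite A" "A \<noteq> {}"
  shows "\<exists>m\<in>A. \<forall>a\<in>A. le a m"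
  using assms
proof (induction A rule: finite_ne_induct)
  case (singleton x)
  show ?case using term_order_refl by blast
next
  case (insert x A)
  then obtain m where "m \<in> A" "\<forall>a\<in>A. le a m" by blast
  then show ?case
    using term_order_linear[of x m] term_order_refl term_order_trans by blast
qed

end

lemma nat_seq_incseq_subseq:
  fixes s :: "nat \<Rightarrow> nat"
  shows "\<exists>r. strict_mono r \<and> incseq (s \<circ> r)"
proof -
  obtain r where r: "strict_mono r" "monoseq (s \<circ> r)"
    using seq_monosub[of s] by (auto simp: o_def)
  show ?thesis
  proof (cases "incseq (s \<circ> r)")
    case True
    with r show ?thesis by blast
  next
    case False
    with r(2) have dec: "decseq (s \<circ> r)" by (simp add: monoseq_iff)
    define v where "v = (LEAST v. v \<in> range (s \<circ> r))"
    have "v \<in> range (s \<circ> r)"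
      unfolding v_def by (rule LeastI[of _ "s (r 0)"]) simp
    then obtain k where k: "s (r k) = v" by auto
    have v_le: "v \<le> s (r m)" for m
      unfolding v_def by (rule Least_le) simp
    have "s (r (k + m)) = v" for m
      using dec k v_le[of "k + m"] unfolding decseq_def by (metis le_add1 le_antisym o_apply)
    moreover have "strict_mono (\<lambda>m. r (k + m))"
      using r(1) by (simp add: strict_mono_def)
    ultimately show ?thesis
      by (intro exI[of _ "\<lambda>m. r (k + m)"]) (simp add: incseq_def o_def)
  qed
qed

lemma coordinatewise_incseq_subseq:
  fixes f :: "nat \<Rightarrow> 'i \<Rightarrow> nat"
  assumes "finite I"
  shows "\<exists>r. strict_mono r \<and> (\<forall>i\<in>I. incseq (\<lambda>k. f (r k) i))"
  using assms
proof (induction I rule: finite_induct)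
  case empty
  show ?case by (intro exI[of _ id]) (simp add: strict_mono_def)
next
  case (insert a I)
  then obtain g where g: "strict_mono g" "\<forall>i\<in>I. incseq (\<lambda>k. f (g k) i)" by blast
  obtain r where r: "strict_mono r" "incseq ((\<lambda>k. f (g k) a) \<circ> r)"
    using nat_seq_incseq_subseq by blast
  have "incseq (\<lambda>k. f (g (r k)) i)" if "i \<in> I" for i
    using g(2) that r(1) unfolding incseq_def by (simp add: strict_mono_less_eq)
  moreover have "strict_mono (g \<circ> r)"
    using g(1) r(1) by (simp add: strict_mono_def)
  ultimately show ?case
    using r(2) by (intro exI[of _ "g \<circ> r"]) (auto simp: o_def)
qed

lemma exp_seq_good:
  fixes f :: "nat \<Rightarrow> 'd::finite \<Rightarrow> nat"
  shows "\<exists>i j. i < j \<and> f i \<le> f j"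
proof -
  obtain r where r: "strict_mono r" "\<forall>i. incseq (\<lambda>k. f (r k) i)"
    using coordinatewise_incseq_subseq[of UNIV f] by auto
  then have "r 0 < r 1" "f (r 0) \<le> f (r 1)"
    by (auto simp: strict_mono_def le_fun_def incseq_def)
  then show ?thesis by blast
qed

definition term_order_less ::
  "(('d \<Rightarrow> nat) \<Rightarrow> ('d \<Rightarrow> nat) \<Rightarrow> bool) \<Rightarrow> (('d \<Rightarrow> nat) \<times> ('d \<Rightarrow> nat)) set" where
  "term_order_less le = {(a, b). le a b \<and> a \<noteq> b}"

lemma wf_term_order_less:
  fixes le :: "('d::finite \<Rightarrow> nat) \<Rightarrow> ('d \<Rightarrow> nat) \<Rightarrow> bool"
  assumes to: "term_order le"
  shows "wf (term_order_less le)"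
proof (rule ccontr)
  assume "\<not> wf (term_order_less le)"
  then obtain f where f: "\<And>i. (f (Suc i), f i) \<in> term_order_less le"
    unfolding wf_iff_no_infinite_down_chain by blast
  have chain: "le (f j) (f i) \<and> f j \<noteq> f i" if "i < j" for i j
    using that
  proof (induction j)
    case (Suc j)
    have step: "le (f (Suc j)) (f j)" "f (Suc j) \<noteq> f j"
      using f by (auto simp: term_order_less_def)
    show ?case
    proof (cases "i = j")
      case False
      with Suc have "le (f j) (f i)" "f j \<noteq> f i" by auto
      with step show ?thesis
        using term_order_trans[OF to] term_order_antisym[OF to] by metis
    qed (use step in simp)
  qed simp
  obtain i j where "i < j" "f i \<le> f j"
    using exp_seq_good[of f] by blast
  then show False
    using chain term_order_mono[OF to] term_order_antisym[OF to] by blast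
qed


section \<open>Standard exponents and representable functions\<close>

lemma mono_add: "mono x (\<lambda>i. a i + b i) = mono x a * mono x b"
  unfolding mono_def by (simp add: power_add prod.distrib)

lemma mono_zero: "mono x (\<lambda>_. 0) = 1"
  unfolding mono_def by simp

definition axis_exp :: "nat \<Rightarrow> 'd \<Rightarrow> 'd \<Rightarrow> nat" where
  "axis_exp k i = (\<lambda>j. if j = i then k else 0)"

lemma mono_axis_exp: "mono x (axis_exp k i) = x i ^ k"
proof -
  have "mono x (axis_exp k i) = (\<Prod>j\<in>UNIV. if j = i then x i ^ k else 1)"
    unfolding mono_def axis_exp_def by (intro prod.cong) auto
  then show ?thesis by simp
qed

lemma inj_axis_exp: "inj (\<lambda>k. axis_exp k i)"
  by (rule injI) (auto simp: axis_exp_def fun_eq_iff split: if_splits)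

text \<open>The univariate polynomial \<Prod>x\<in>D. (t - x i) in the i-th variable lies in I(D) and
  has leading exponent card D times the i-th unit vector under every term ordering.\<close>
lemma std_exps_bounded:
  fixes D :: "('d::finite \<Rightarrow> real) set"
  assumes D: "finite D" and to: "term_order le" and \<alpha>: "\<alpha> \<in> std_exps D le"
  shows "\<alpha> i < card D"
proof (rule ccontr)
  assume "\<not> \<alpha> i < card D"
  define n where "n = card D"
  define Q :: "real poly" where "Q = (\<Prod>x\<in>D. [:- x i, 1:])"
  have deg: "degree Q = n"
    unfolding Q_def n_def by (subst degree_prod_eq_sum_degree) auto
  have lead_coeff: "coeff Q n = 1"
    using deg lead_coeff_prod[of "\<lambda>x. [:- x i, 1:]" D] unfolding Q_def by simp
  define p :: "('d \<Rightarrow> nat) \<Rightarrow> real" where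
    "p = (\<lambda>\<beta>. if \<forall>j. j \<noteq> i \<longrightarrow> \<beta> j = 0 then coeff Q (\<beta> i) else 0)"
  have p_axis: "p (axis_exp k i) = coeff Q k" for k
    unfolding p_def axis_exp_def by simp
  have supp: "supp p \<subseteq> (\<lambda>k. axis_exp k i) ` {..n}"
  proof
    fix \<beta> assume "\<beta> \<in> supp p"
    then have \<beta>: "\<forall>j. j \<noteq> i \<longrightarrow> \<beta> j = 0" "coeff Q (\<beta> i) \<noteq> 0"
      unfolding supp_def p_def by (auto split: if_splits)
    then have "\<beta> i \<le> n" using coeff_eq_0[of Q "\<beta> i"] deg by fastforce
    moreover have "\<beta> = axis_exp (\<beta> i) i" using \<beta>(1) unfolding axis_exp_def by auto
    ultimately show "\<beta> \<in> (\<lambda>k. axis_exp k i) ` {..n}" by blast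
  qed
  have eval: "poly_eval p x = poly Q (x i)" for x
  proof -
    have "poly_eval p x = (\<Sum>\<beta>\<in>(\<lambda>k. axis_exp k i) ` {..n}. p \<beta> * mono x \<beta>)"
      unfolding poly_eval_def
      by (rule sum.mono_neutral_left) (use supp in \<open>auto simp: supp_def\<close>)
    also have "\<dots> = (\<Sum>k\<le>n. coeff Q k * x i ^ k)"
      by (subst sum.reindex) (use inj_axis_exp[of i] in \<open>auto intro: inj_on_subset simp: p_axis mono_axis_exp\<close>)
    also have "\<dots> = poly Q (x i)" by (simp add: poly_altdef deg)
    finally show ?thesis .
  qed
  have "p \<in> vanishing_ideal D"
    unfolding vanishing_ideal_def is_poly_def
    using finite_subset[OF supp] D by (auto simp: eval Q_def poly_prod)
  moreover have "is_leading_exp le p (axis_exp n i)"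
    unfolding is_leading_exp_def
  proof (intro conjI allI impI)
    show "p (axis_exp n i) \<noteq> 0" using p_axis lead_coeff by simp
    fix \<gamma> assume "p \<gamma> \<noteq> 0"
    then obtain k where "k \<le> n" "\<gamma> = axis_exp k i" using supp by (auto simp: supp_def)
    then show "le \<gamma> (axis_exp n i)"
      by (intro term_order_mono[OF to]) (auto simp: axis_exp_def le_fun_def)
  qed
  moreover have "axis_exp n i \<le> \<alpha>"
    using \<open>\<not> \<alpha> i < card D\<close> unfolding n_def by (auto simp: axis_exp_def le_fun_def)
  ultimately show False using \<alpha> unfolding std_exps_def by blast
qed

lemma finite_std_exps:
  fixes D :: "('d::finite \<Rightarrow> real) set"
  assumes "finite D" "term_order le"
  shows "finite (std_exps D le)"
proof (rule finite_subset)
  show "std_exps D le \<subseteq> {\<alpha>. \<forall>i. \<alpha> i \<in> {..<card D}}"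
    using std_exps_bounded[OF assms] by auto
  show "finite {\<alpha> :: 'd \<Rightarrow> nat. \<forall>i. \<alpha> i \<in> {..<card D}}"
    using finite_set_of_finite_funs[of "UNIV :: 'd set" "{..<card D}" 0] by simp
qed

definition spanned_on :: "('d::finite \<Rightarrow> real) set \<Rightarrow> ('d \<Rightarrow> nat) set \<Rightarrow> (('d \<Rightarrow> real) \<Rightarrow> real) \<Rightarrow> bool" where
  "spanned_on D L f \<longleftrightarrow> (\<exists>c. \<forall>x\<in>D. f x = (\<Sum>\<beta>\<in>L. c \<beta> * mono x \<beta>))"

lemma spanned_on_add:
  assumes "spanned_on D L f" "spanned_on D L g"
  shows "spanned_on D L (\<lambda>x. f x + g x)"
proof -
  obtain c d where "\<forall>x\<in>D. f x = (\<Sum>\<beta>\<in>L. c \<beta> * mono x \<beta>)" "\<forall>x\<in>D. g x = (\<Sum>\<beta>\<in>L. d \<beta> * mono x \<beta>)"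
    using assms unfolding spanned_on_def by blast
  then show ?thesis unfolding spanned_on_def
    by (intro exI[of _ "\<lambda>\<beta>. c \<beta> + d \<beta>"]) (simp add: distrib_right sum.distrib)
qed

lemma spanned_on_cmult:
  assumes "spanned_on D L f"
  shows "spanned_on D L (\<lambda>x. a * f x)"
proof -
  obtain c where "\<forall>x\<in>D. f x = (\<Sum>\<beta>\<in>L. c \<beta> * mono x \<beta>)"
    using assms unfolding spanned_on_def by blast
  then show ?thesis unfolding spanned_on_def
    by (intro exI[of _ "\<lambda>\<beta>. a * c \<beta>"]) (simp add: sum_distrib_left mult.assoc)
qed

lemma spanned_on_sum:
  assumes "\<And>a. a \<in> A \<Longrightarrow> spanned_on D L (g a)"
  shows "spanned_on D L (\<lambda>x. \<Sum>a\<in>A. g a x)"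
  using assms
proof (induction A rule: infinite_finite_induct)
  case (insert a A)
  then show ?case using spanned_on_add[of D L "g a"] by simp
qed (auto simp: spanned_on_def intro: exI[of _ "\<lambda>_. 0"])

lemma spanned_on_cong:
  "spanned_on D L f \<Longrightarrow> (\<And>x. x \<in> D \<Longrightarrow> f x = g x) \<Longrightarrow> spanned_on D L g"
  unfolding spanned_on_def by auto

text \<open>Division by the elements of I(D) with leading exponent below \<alpha>, by well-founded
  induction along the term ordering.\<close>
lemma mono_spanned_on_std_exps:
  fixes D :: "('d::finite \<Rightarrow> real) set"
  assumes D: "finite D" and to: "term_order le"
  shows "spanned_on D (std_exps D le) (\<lambda>x. mono x \<alpha>)"
proof (induction \<alpha> rule: wf_induct_rule[OF wf_term_order_less[OF to]])
  case (1 \<alpha>)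
  define L where "L = std_exps D le"
  show ?case
  proof (cases "\<alpha> \<in> L")
    case True
    have "(\<Sum>\<beta>\<in>L. (if \<beta> = \<alpha> then 1 else 0) * mono x \<beta>) = (\<Sum>\<beta>\<in>L. if \<beta> = \<alpha> then mono x \<beta> else 0)" for x
      by (rule sum.cong) auto
    then have "mono x \<alpha> = (\<Sum>\<beta>\<in>L. (if \<beta> = \<alpha> then 1 else 0) * mono x \<beta>)" for x
      using True finite_std_exps[OF D to] unfolding L_def by simp
    then show ?thesis
      unfolding spanned_on_def L_def by (intro exI[of _ "\<lambda>\<beta>. if \<beta> = \<alpha> then 1 else 0"]) blast
  next
    case False
    then obtain p \<beta> where p: "p \<in> vanishing_ideal D" and lead: "is_leading_exp le p \<beta>"
      and "\<beta> \<le> \<alpha>" unfolding L_def std_exps_def by blast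
    define shift where "shift = (\<lambda>\<gamma> i. \<gamma> i + (\<alpha> i - \<beta> i))"
    have shift_\<beta>: "shift \<beta> = \<alpha>"
      using \<open>\<beta> \<le> \<alpha>\<close> unfolding shift_def by (auto simp: le_fun_def fun_eq_iff)
    have p\<beta>: "p \<beta> \<noteq> 0" using lead unfolding is_leading_exp_def by blast
    have fin: "finite (supp p)" using p unfolding vanishing_ideal_def is_poly_def by blast
    define G where "G = supp p - {\<beta>}"
    have "(shift \<gamma>, \<alpha>) \<in> term_order_less le" if "\<gamma> \<in> G" for \<gamma>
    proof -
      have "p \<gamma> \<noteq> 0" "\<gamma> \<noteq> \<beta>" using that unfolding G_def supp_def by auto
      then have "le (shift \<gamma>) (shift \<beta>)" "shift \<gamma> \<noteq> shift \<beta>"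
        using lead term_order_add[OF to] unfolding is_leading_exp_def shift_def
        by (auto simp: fun_eq_iff)
      then show ?thesis using shift_\<beta> by (simp add: term_order_less_def)
    qed
    then have "\<forall>\<gamma>\<in>G. \<exists>c. \<forall>x\<in>D. mono x (shift \<gamma>) = (\<Sum>\<eta>\<in>L. c \<eta> * mono x \<eta>)"
      using 1 unfolding spanned_on_def L_def by blast
    then obtain C where C: "\<And>\<gamma> x. \<gamma> \<in> G \<Longrightarrow> x \<in> D \<Longrightarrow> mono x (shift \<gamma>) = (\<Sum>\<eta>\<in>L. C \<gamma> \<eta> * mono x \<eta>)"
      by metis
    have "spanned_on D L (\<lambda>x. - (1 / p \<beta>) * (\<Sum>\<gamma>\<in>G. p \<gamma> * mono x (shift \<gamma>)))"
    proof (intro spanned_on_cmult spanned_on_sum)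
      fix \<gamma> assume "\<gamma> \<in> G"
      then show "spanned_on D L (\<lambda>x. mono x (shift \<gamma>))"
        using C unfolding spanned_on_def by (intro exI[of _ "C \<gamma>"]) blast
    qed
    moreover have "- (1 / p \<beta>) * (\<Sum>\<gamma>\<in>G. p \<gamma> * mono x (shift \<gamma>)) = mono x \<alpha>" if "x \<in> D" for x
    proof -
      have "0 = poly_eval p x * mono x (\<lambda>i. \<alpha> i - \<beta> i)"
        using p that unfolding vanishing_ideal_def by simp
      also have "\<dots> = (\<Sum>\<gamma>\<in>supp p. p \<gamma> * mono x (shift \<gamma>))"
        unfolding poly_eval_def sum_distrib_right shift_def mono_add by (simp add: mult.assoc)
      also have "\<dots> = p \<beta> * mono x \<alpha> + (\<Sum>\<gamma>\<in>G. p \<gamma> * mono x (shift \<gamma>))"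
        using fin p\<beta> shift_\<beta> unfolding G_def by (simp add: sum.remove supp_def)
      finally show ?thesis using p\<beta> by (simp add: field_simps)
    qed
    ultimately show ?thesis unfolding L_def by (rule spanned_on_cong)
  qed
qed

lemma spanned_on_mult_coord:
  assumes mono: "\<And>\<alpha>. spanned_on D L (\<lambda>x. mono x \<alpha>)" and f: "spanned_on D L f"
  shows "spanned_on D L (\<lambda>x. x i * f x)"
proof -
  obtain c where c: "\<forall>x\<in>D. f x = (\<Sum>\<beta>\<in>L. c \<beta> * mono x \<beta>)"
    using f unfolding spanned_on_def by blast
  have "spanned_on D L (\<lambda>x. \<Sum>\<beta>\<in>L. c \<beta> * mono x (\<lambda>j. \<beta> j + axis_exp 1 i j))"
    by (intro spanned_on_sum spanned_on_cmult mono)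
  then show ?thesis
    by (rule spanned_on_cong)
      (simp add: c mono_add mono_axis_exp sum_distrib_left mult_ac)
qed

lemma spanned_on_prod_affine:
  assumes mono: "\<And>\<alpha>. spanned_on D L (\<lambda>x. mono x \<alpha>)" and Z: "finite Z"
  shows "spanned_on D L (\<lambda>y. \<Prod>z\<in>Z. (y (ix z) - a z) * b z)"
  using Z
proof (induction Z rule: finite_induct)
  case empty
  then show ?case using mono[of "\<lambda>_. 0"] by (simp add: mono_zero)
next
  case (insert z Z)
  define g where "g = (\<lambda>y. \<Prod>z\<in>Z. (y (ix z) - a z) * b z)"
  have "spanned_on D L (\<lambda>y. b z * (y (ix z) * g y) + (- a z * b z) * g y)"
    using insert.IH unfolding g_def
    by (intro spanned_on_add spanned_on_cmult spanned_on_mult_coord[OF mono])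
  then show ?case
    by (rule spanned_on_cong) (use insert.hyps in \<open>simp add: g_def algebra_simps\<close>)
qed

text \<open>Lagrange interpolation: the indicator of x \<in> D is a product of affine functions,
  one for each other point z, in a coordinate where z differs from x.\<close>
lemma spanned_on_indicator:
  fixes D :: "('d::finite \<Rightarrow> real) set"
  assumes mono: "\<And>\<alpha>. spanned_on D L (\<lambda>x. mono x \<alpha>)" and D: "finite D" and x: "x \<in> D"
  shows "spanned_on D L (\<lambda>y. if y = x then 1 else 0)"
proof -
  obtain ix where ix: "\<And>z. z \<noteq> x \<Longrightarrow> z (ix z) \<noteq> x (ix z)"
    by (metis ext)
  have "spanned_on D L (\<lambda>y. \<Prod>z\<in>D - {x}. (y (ix z) - z (ix z)) * (1 / (x (ix z) - z (ix z))))"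
    using D by (intro spanned_on_prod_affine[OF mono]) simp
  then show ?thesis
  proof (rule spanned_on_cong)
    fix y assume y: "y \<in> D"
    show "(\<Prod>z\<in>D - {x}. (y (ix z) - z (ix z)) * (1 / (x (ix z) - z (ix z)))) = (if y = x then 1 else 0)"
    proof (cases "y = x")
      case True
      then show ?thesis
        using ix by (simp add: eq_commute[of "x _"])
    next
      case False
      with y have "y \<in> D - {x}" by simp
      then show ?thesis using D False by (auto intro!: prod_zero bexI[of _ y])
    qed
  qed
qed

lemma spanned_on_all:
  fixes D :: "('d::finite \<Rightarrow> real) set"
  assumes mono: "\<And>\<alpha>. spanned_on D L (\<lambda>x. mono x \<alpha>)" and D: "finite D"
  shows "spanned_on D L f"
proof -
  have "spanned_on D L (\<lambda>y. \<Sum>x\<in>D. f x * (if y = x then 1 else 0))"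
    by (intro spanned_on_sum spanned_on_cmult spanned_on_indicator[OF mono D])
  then show ?thesis
    by (rule spanned_on_cong) (use D in \<open>simp add: if_distrib cong: if_cong\<close>)
qed


section \<open>The number of standard exponents\<close>

definition fscale :: "real \<Rightarrow> ('a \<Rightarrow> real) \<Rightarrow> 'a \<Rightarrow> real" where
  "fscale c f = (\<lambda>x. c * f x)"

interpretation fun_space: vector_space fscale
  by unfold_locales (auto simp: fscale_def fun_eq_iff algebra_simps)

lemma sum_fun_apply: "(\<Sum>v\<in>A. g v) y = (\<Sum>v\<in>A. g v y)"
  by (induction A rule: infinite_finite_induct) auto

definition unit_fun :: "'a \<Rightarrow> 'a \<Rightarrow> real" where
  "unit_fun x = (\<lambda>y. if y = x then 1 else 0)"

lemma inj_unit_fun: "inj unit_fun"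
  by (rule injI) (simp add: unit_fun_def fun_eq_iff, metis zero_neq_one)

lemma independent_unit_fun:
  assumes "finite D"
  shows "fun_space.independent (unit_fun ` D)"
proof (rule fun_space.independent_if_scalars_zero)
  show "finite (unit_fun ` D)" using assms by simp
  fix u v assume sum: "(\<Sum>v\<in>unit_fun ` D. fscale (u v) v) = 0" and "v \<in> unit_fun ` D"
  then obtain y where y: "y \<in> D" "v = unit_fun y" by blast
  have "0 = (\<Sum>v\<in>unit_fun ` D. fscale (u v) v) y" using sum by simp
  also have "\<dots> = (\<Sum>x\<in>D. u (unit_fun x) * unit_fun x y)"
    by (simp add: sum_fun_apply fscale_def sum.reindex[OF inj_on_subset[OF inj_unit_fun]])
  also have "\<dots> = (\<Sum>x\<in>D. if x = y then u (unit_fun x) else 0)"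
    by (rule sum.cong) (auto simp: unit_fun_def)
  also have "\<dots> = u v" using assms y by simp
  finally show "u v = 0" by simp
qed

lemma in_span_unit_fun:
  assumes "finite D" "\<And>y. y \<notin> D \<Longrightarrow> g y = 0"
  shows "g \<in> fun_space.span (unit_fun ` D)"
proof -
  have "g = (\<Sum>x\<in>D. fscale (g x) (unit_fun x))"
  proof
    fix y
    have "(\<Sum>x\<in>D. fscale (g x) (unit_fun x)) y = (\<Sum>x\<in>D. if x = y then g y else 0)"
      unfolding sum_fun_apply fscale_def unit_fun_def by (rule sum.cong) auto
    then show "g y = (\<Sum>x\<in>D. fscale (g x) (unit_fun x)) y" using assms by auto
  qed
  also have "\<dots> \<in> fun_space.span (unit_fun ` D)"
    by (intro fun_space.span_sum fun_space.span_scale fun_space.span_base) auto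
  finally show ?thesis .
qed

definition eval_fun :: "('d::finite \<Rightarrow> real) set \<Rightarrow> ('d \<Rightarrow> nat) \<Rightarrow> ('d \<Rightarrow> real) \<Rightarrow> real" where
  "eval_fun D \<beta> = (\<lambda>y. if y \<in> D then mono y \<beta> else 0)"

lemma card_le_if_spanned_on_all:
  fixes D :: "('d::finite \<Rightarrow> real) set"
  assumes D: "finite D" and L: "finite L" and spanned: "\<And>f. spanned_on D L f"
  shows "card D \<le> card L"
proof -
  have "unit_fun ` D \<subseteq> fun_space.span (eval_fun D ` L)"
  proof
    fix v assume "v \<in> unit_fun ` D"
    then obtain x where x: "x \<in> D" "v = unit_fun x" by blast
    obtain c where c: "\<forall>y\<in>D. unit_fun x y = (\<Sum>\<beta>\<in>L. c \<beta> * mono y \<beta>)"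
      using spanned[of "unit_fun x"] unfolding spanned_on_def by blast
    have "unit_fun x = (\<Sum>\<beta>\<in>L. fscale (c \<beta>) (eval_fun D \<beta>))"
    proof
      fix y show "unit_fun x y = (\<Sum>\<beta>\<in>L. fscale (c \<beta>) (eval_fun D \<beta>)) y"
        using c x by (cases "y \<in> D") (auto simp: sum_fun_apply fscale_def eval_fun_def unit_fun_def)
    qed
    also have "\<dots> \<in> fun_space.span (eval_fun D ` L)"
      by (intro fun_space.span_sum fun_space.span_scale fun_space.span_base) auto
    finally show "v \<in> fun_space.span (eval_fun D ` L)" using x by simp
  qed
  then have "card (unit_fun ` D) \<le> card (eval_fun D ` L)"
    using fun_space.independent_span_bound[OF _ independent_unit_fun[OF D]] L by simp
  also have "\<dots> \<le> card L" by (rule card_image_le[OF L])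
  finally show ?thesis by (simp add: card_image[OF inj_on_subset[OF inj_unit_fun]])
qed

definition monomials_independent_on :: "('d::finite \<Rightarrow> real) set \<Rightarrow> ('d \<Rightarrow> nat) set \<Rightarrow> bool" where
  "monomials_independent_on D L \<longleftrightarrow>
     (\<forall>c. (\<forall>x\<in>D. (\<Sum>\<alpha>\<in>L. c \<alpha> * mono x \<alpha>) = 0) \<longrightarrow> (\<forall>\<alpha>\<in>L. c \<alpha> = 0))"

lemma identifiable_iff:
  "identifiable D L \<longleftrightarrow> finite D \<and> finite L \<and> card L = card D \<and> monomials_independent_on D L"
  unfolding identifiable_def monomials_independent_on_def ..

lemma card_le_if_monomials_independent_on:
  fixes D :: "('d::finite \<Rightarrow> real) set"
  assumes D: "finite D" and L: "finite L" and indep: "monomials_independent_on D L"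
  shows "card L \<le> card D"
proof -
  have zero: "c \<alpha> = 0" if "\<alpha> \<in> L" "\<And>x. (\<Sum>\<alpha>\<in>L. c \<alpha> * eval_fun D \<alpha> x) = 0" for c \<alpha>
  proof -
    have "\<forall>x\<in>D. (\<Sum>\<alpha>\<in>L. c \<alpha> * mono x \<alpha>) = 0"
    proof
      fix x assume "x \<in> D"
      with that(2)[of x] show "(\<Sum>\<alpha>\<in>L. c \<alpha> * mono x \<alpha>) = 0" by (simp add: eval_fun_def)
    qed
    then show ?thesis using indep that(1) unfolding monomials_independent_on_def by blast
  qed
  have inj: "inj_on (eval_fun D) L"
  proof (rule inj_onI, rule ccontr)
    fix \<beta> \<gamma> assume \<beta>\<gamma>: "\<beta> \<in> L" "\<gamma> \<in> L" "eval_fun D \<beta> = eval_fun D \<gamma>" "\<beta> \<noteq> \<gamma>"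
    define c where "c = (\<lambda>\<alpha>. (if \<alpha> = \<beta> then 1 else 0) - (if \<alpha> = \<gamma> then 1 else (0::real)))"
    have "(\<Sum>\<alpha>\<in>L. c \<alpha> * eval_fun D \<alpha> x) = 0" for x
    proof -
      have "(\<Sum>\<alpha>\<in>L. c \<alpha> * eval_fun D \<alpha> x)
          = (\<Sum>\<alpha>\<in>L. (if \<alpha> = \<beta> then eval_fun D \<alpha> x else 0) - (if \<alpha> = \<gamma> then eval_fun D \<alpha> x else 0))"
        by (rule sum.cong) (auto simp: c_def)
      also have "\<dots> = eval_fun D \<beta> x - eval_fun D \<gamma> x"
        using L \<beta>\<gamma>(1,2) by (simp add: sum_subtractf)
      finally show ?thesis using \<beta>\<gamma>(3) by simp
    qed
    then have "c \<beta> = 0" by (rule zero[OF \<beta>\<gamma>(1)])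
    then show False using \<beta>\<gamma>(4) by (simp add: c_def)
  qed
  have scalars_zero: "u v = 0"
    if sum: "(\<Sum>v\<in>eval_fun D ` L. fscale (u v) v) = 0" and "v \<in> eval_fun D ` L" for u v
  proof -
    obtain \<beta> where \<beta>: "\<beta> \<in> L" "v = eval_fun D \<beta>" using \<open>v \<in> eval_fun D ` L\<close> by blast
    have "(\<Sum>\<alpha>\<in>L. u (eval_fun D \<alpha>) * eval_fun D \<alpha> x) = 0" for x
      using fun_cong[OF sum, of x] by (simp add: sum_fun_apply fscale_def sum.reindex[OF inj])
    then have "u (eval_fun D \<beta>) = 0" by (rule zero[where c = "\<lambda>\<alpha>. u (eval_fun D \<alpha>)", OF \<beta>(1)])
    with \<beta>(2) show ?thesis by (simp only:)
  qed
  have indep_evals: "fun_space.independent (eval_fun D ` L)"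
    unfolding fun_space.dependent_finite[OF finite_imageI[OF L]] using scalars_zero by blast
  have "eval_fun D ` L \<subseteq> fun_space.span (unit_fun ` D)"
  proof
    fix v assume "v \<in> eval_fun D ` L"
    then obtain \<beta> where "v = eval_fun D \<beta>" by blast
    then show "v \<in> fun_space.span (unit_fun ` D)"
      by (intro in_span_unit_fun[OF D]) (simp add: eval_fun_def)
  qed
  then have "card (eval_fun D ` L) \<le> card (unit_fun ` D)"
    using fun_space.independent_span_bound[OF _ indep_evals] D by simp
  then show ?thesis
    by (simp add: card_image[OF inj] card_image[OF inj_on_subset[OF inj_unit_fun]])
qed

text \<open>A vanishing combination of standard monomials would be a polynomial in I(D) whose
  leading exponent is standard.\<close>
lemma monomials_independent_on_std_exps:
  fixes D :: "('d::finite \<Rightarrow> real) set"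
  assumes D: "finite D" and to: "term_order le"
  shows "monomials_independent_on D (std_exps D le)"
  unfolding monomials_independent_on_def
proof (intro allI impI ballI, rule ccontr)
  define L where "L = std_exps D le"
  fix c \<alpha> assume zero: "\<forall>x\<in>D. (\<Sum>\<alpha>\<in>std_exps D le. c \<alpha> * mono x \<alpha>) = 0"
    and "\<alpha> \<in> std_exps D le" "c \<alpha> \<noteq> 0"
  define p where "p = (\<lambda>\<gamma>. if \<gamma> \<in> L then c \<gamma> else 0)"
  have L: "finite L" unfolding L_def using finite_std_exps[OF D to] .
  have supp: "supp p \<subseteq> L" and "supp p \<noteq> {}"
    using \<open>\<alpha> \<in> std_exps D le\<close> \<open>c \<alpha> \<noteq> 0\<close> by (auto simp: supp_def p_def L_def)
  then obtain \<beta> where \<beta>: "\<beta> \<in> supp p" "\<forall>\<gamma>\<in>supp p. le \<gamma> \<beta>"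
    using term_order_finite_max[OF to finite_subset[OF supp L]] by blast
  have "poly_eval p x = (\<Sum>\<gamma>\<in>L. c \<gamma> * mono x \<gamma>)" for x
    unfolding poly_eval_def
    by (rule sum.mono_neutral_cong_left[OF L supp]) (auto simp: supp_def p_def)
  then have "p \<in> vanishing_ideal D"
    using zero finite_subset[OF supp L] unfolding vanishing_ideal_def is_poly_def L_def by simp
  moreover have "is_leading_exp le p \<beta>"
    using \<beta> unfolding is_leading_exp_def supp_def by blast
  moreover have "\<beta> \<in> std_exps D le" using \<beta>(1) supp unfolding L_def by blast
  ultimately show False unfolding std_exps_def using order_refl[of \<beta>] by blast
qed

theorem card_std_exps:
  fixes D :: "('d::finite \<Rightarrow> real) set"
  assumes D: "finite D" and to: "term_order le"
  shows "card (std_exps D le) = card D"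
proof (rule antisym)
  show "card (std_exps D le) \<le> card D"
    by (rule card_le_if_monomials_independent_on[OF D finite_std_exps[OF D to]
          monomials_independent_on_std_exps[OF D to]])
  show "card D \<le> card (std_exps D le)"
    by (rule card_le_if_spanned_on_all[OF D finite_std_exps[OF D to]
          spanned_on_all[OF mono_spanned_on_std_exps[OF D to] D]])
qed

lemma std_exps_eq_initial_segment:
  fixes D :: "('d::finite \<Rightarrow> real) set"
  assumes to: "term_order le" and ident: "identifiable D S"
    and initial: "\<And>a b. a \<in> S \<Longrightarrow> b \<notin> S \<Longrightarrow> le a b"
  shows "std_exps D le = S"
proof (rule sym, rule card_subset_eq)
  have D: "finite D" and S: "finite S" and card: "card S = card D"
    and indep: "monomials_independent_on D S"
    using ident unfolding identifiable_iff by blast+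
  show "finite (std_exps D le)" using finite_std_exps[OF D to] .
  show "card S = card (std_exps D le)" using card card_std_exps[OF D to] by simp
  have below_in_S: "\<gamma> \<in> S" if "\<delta> \<in> S" "le \<gamma> \<delta>" for \<gamma> \<delta>
    using initial[of \<delta> \<gamma>] that term_order_antisym[OF to] by blast
  show "S \<subseteq> std_exps D le"
  proof (intro subsetI, unfold std_exps_def, intro CollectI notI, elim bexE exE conjE)
    fix \<alpha> p \<beta> assume "\<alpha> \<in> S" and p: "p \<in> vanishing_ideal D" and lead: "is_leading_exp le p \<beta>"
      and "\<beta> \<le> \<alpha>"
    then have "\<beta> \<in> S" using below_in_S term_order_mono[OF to] by blast
    then have supp: "supp p \<subseteq> S"
      using lead below_in_S unfolding supp_def is_leading_exp_def by blast
    have "(\<Sum>\<gamma>\<in>S. p \<gamma> * mono x \<gamma>) = 0" if "x \<in> D" for x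
    proof -
      have "(\<Sum>\<gamma>\<in>S. p \<gamma> * mono x \<gamma>) = poly_eval p x"
        unfolding poly_eval_def
        by (rule sum.mono_neutral_right[OF S supp]) (auto simp: supp_def)
      also have "\<dots> = 0" using p that unfolding vanishing_ideal_def by blast
      finally show ?thesis .
    qed
    then have "p \<beta> = 0"
      using indep \<open>\<beta> \<in> S\<close> unfolding monomials_independent_on_def by blast
    then show False using lead unfolding is_leading_exp_def by blast
  qed
qed


section \<open>A generic design\<close>

lemma vandermonde_coeffs_zero:
  fixes u :: "'a \<Rightarrow> real"
  assumes L: "finite L" and inj: "inj_on u L" and b: "b \<in> L"
    and zero: "\<And>j. j < card L \<Longrightarrow> (\<Sum>\<alpha>\<in>L. c \<alpha> * u \<alpha> ^ j) = 0"
  shows "c b = 0"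
proof -
  define Q :: "real poly" where "Q = (\<Prod>\<alpha>\<in>L - {b}. [:- u \<alpha>, 1:])"
  have "card L > 0" using L b card_gt_0_iff by blast
  then have deg: "degree Q < card L"
    unfolding Q_def using L b by (subst degree_prod_eq_sum_degree) auto
  have "(\<Sum>\<alpha>\<in>L. c \<alpha> * poly Q (u \<alpha>)) = (\<Sum>j\<le>degree Q. coeff Q j * (\<Sum>\<alpha>\<in>L. c \<alpha> * u \<alpha> ^ j))"
    by (simp add: poly_altdef sum_distrib_left sum.swap[of _ L] mult_ac)
  also have "\<dots> = 0"
    using deg zero by (intro sum.neutral) auto
  also have "poly Q (u \<alpha>) = 0" if "\<alpha> \<in> L - {b}" for \<alpha>
    using that L unfolding Q_def poly_prod by (auto intro!: prod_zero bexI[of _ \<alpha>])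
  then have "(\<Sum>\<alpha>\<in>L. c \<alpha> * poly Q (u \<alpha>)) = c b * poly Q (u b)"
    using L b by (simp add: sum.remove)
  finally show "c b = 0"
    using L inj b by (auto simp: Q_def poly_prod inj_on_def)
qed

lemma exists_inj_prime: "\<exists>P :: 'd::finite \<Rightarrow> nat. inj P \<and> (\<forall>i. prime (P i))"
proof -
  obtain g :: "'d \<Rightarrow> nat" where "inj g"
    using finite_imp_inj_to_nat_seg[of "UNIV :: 'd set"] by auto
  moreover obtain f :: "nat \<Rightarrow> nat" where "inj f" "range f \<subseteq> {p. prime p}"
    using infinite_countable_subset[OF primes_infinite] by blast
  ultimately show ?thesis
    by (intro exI[of _ "f \<circ> g"]) (auto simp: inj_compose)
qed

definition prime_code :: "('d::finite \<Rightarrow> nat) \<Rightarrow> ('d \<Rightarrow> nat) \<Rightarrow> nat" where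
  "prime_code P \<alpha> = (\<Prod>i\<in>UNIV. P i ^ \<alpha> i)"

lemma inj_prime_code:
  assumes P: "inj P" "\<forall>i. prime (P i)"
  shows "inj (prime_code P)"
proof (rule injI, rule ext)
  have multiplicity: "multiplicity (P i) (prime_code P \<alpha>) = \<alpha> i" for \<alpha> i
  proof -
    have code: "prime_code P \<alpha> = (\<Prod>p\<in>range P. p ^ \<alpha> (inv P p))"
      unfolding prime_code_def by (subst prod.reindex[OF P(1)]) (simp add: inv_f_f[OF P(1)])
    show ?thesis
      unfolding code using P by (subst multiplicity_prod_prime_powers) (auto simp: inv_f_f[OF P(1)])
  qed
  fix \<alpha> \<beta> i assume "prime_code P \<alpha> = prime_code P \<beta>"
  then show "\<alpha> i = \<beta> i" using multiplicity[of i \<alpha>] multiplicity[of i \<beta>] by simp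
qed

lemma prime_code_pos: "\<forall>i. prime (P i) \<Longrightarrow> 0 < prime_code P \<alpha>"
  unfolding prime_code_def by (intro prod_pos) (simp add: prime_gt_0_nat)

lemma prime_code_add: "prime_code P (\<lambda>i. a i + b i) = prime_code P a * prime_code P b"
  unfolding prime_code_def by (simp add: power_add prod.distrib)

definition prime_power_point :: "('d::finite \<Rightarrow> nat) \<Rightarrow> nat \<Rightarrow> 'd \<Rightarrow> real" where
  "prime_power_point P j = (\<lambda>i. real (P i) ^ j)"

lemma mono_prime_power_point: "mono (prime_power_point P j) \<alpha> = real (prime_code P \<alpha>) ^ j"
  unfolding mono_def prime_power_point_def prime_code_def
  by (simp add: prod_power_distrib power_mult[symmetric] mult.commute)

lemma card_prime_power_design:
  assumes "\<forall>i. prime (P i)"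
  shows "card (prime_power_point P ` {..<n}) = n"
proof -
  have "1 < real (P i)" for i using assms prime_gt_1_nat by simp
  then have "inj (prime_power_point P)"
    by (intro injI) (simp add: prime_power_point_def fun_eq_iff)
  then show ?thesis by (simp add: card_image inj_on_subset)
qed

lemma identifiable_prime_power_design:
  assumes P: "inj P" "\<forall>i. prime (P i)" and L: "finite L" "card L = n"
  shows "identifiable (prime_power_point P ` {..<n}) L"
  unfolding identifiable_iff monomials_independent_on_def
proof (intro conjI allI impI ballI)
  show "card L = card (prime_power_point P ` {..<n})"
    using L(2) card_prime_power_design[OF P(2)] by simp
  fix c \<beta> assume zero: "\<forall>x\<in>prime_power_point P ` {..<n}. (\<Sum>\<alpha>\<in>L. c \<alpha> * mono x \<alpha>) = 0"
    and "\<beta> \<in> L"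
  show "c \<beta> = 0"
  proof (rule vandermonde_coeffs_zero[OF L(1) _ \<open>\<beta> \<in> L\<close>])
    show "inj_on (\<lambda>\<alpha>. real (prime_code P \<alpha>)) L"
      using inj_prime_code[OF P] by (simp add: inj_on_def inj_def)
    show "(\<Sum>\<alpha>\<in>L. c \<alpha> * real (prime_code P \<alpha>) ^ j) = 0" if "j < card L" for j
      using zero that L(2) by (auto simp: mono_prime_power_point)
  qed
qed (use L in auto)

lemma generic_prime_power_design:
  assumes "inj P" "\<forall>i. prime (P i)"
  shows "generic (prime_power_point P ` {..<n})"
  unfolding generic_def corner_cut_def
  using identifiable_prime_power_design[OF assms] card_prime_power_design[OF assms(2)] by auto

section \<open>The exponents of least weight\<close>

definition weight :: "('d::finite \<Rightarrow> real) \<Rightarrow> ('d \<Rightarrow> nat) \<Rightarrow> real" where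
  "weight w \<alpha> = (\<Sum>i\<in>UNIV. w i * real (\<alpha> i))"

text \<open>The order on pairs is the lexicographic one of HOL-Library.Product_Lexorder.\<close>
definition weighted_order ::
  "('d::finite \<Rightarrow> real) \<Rightarrow> ('d \<Rightarrow> nat) \<Rightarrow> ('d \<Rightarrow> nat) \<Rightarrow> ('d \<Rightarrow> nat) \<Rightarrow> bool" where
  "weighted_order w P a b \<longleftrightarrow> (weight w a, prime_code P a) \<le> (weight w b, prime_code P b)"

lemma weight_le_if_weighted_order: "weighted_order w P a b \<Longrightarrow> weight w a \<le> weight w b"
  unfolding weighted_order_def by auto

lemma weight_add: "weight w (\<lambda>i. a i + b i) = weight w a + weight w b"
  unfolding weight_def by (simp add: distrib_left sum.distrib)

lemma weight_nonneg: "\<forall>i. w i > 0 \<Longrightarrow> 0 \<le> weight w a"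
  unfolding weight_def by (intro sum_nonneg) (simp add: less_imp_le)

lemma term_order_weighted_order:
  fixes w :: "'d::finite \<Rightarrow> real" and P :: "'d \<Rightarrow> nat"
  assumes w: "\<forall>i. w i > 0" and P: "inj P" "\<forall>i. prime (P i)"
  shows "term_order (weighted_order w P)"
  unfolding term_order_def weighted_order_def
proof (intro conjI allI impI)
  fix a b c :: "'d \<Rightarrow> nat"
  show "a = b" if "(weight w a, prime_code P a) \<le> (weight w b, prime_code P b) \<and>
      (weight w b, prime_code P b) \<le> (weight w a, prime_code P a)"
    using that inj_prime_code[OF P] by (auto dest: injD)
  have "weight w (\<lambda>_. 0) = 0" "prime_code P (\<lambda>_. 0) = 1"
    by (simp_all add: weight_def prime_code_def)
  then show "(weight w (\<lambda>_. 0), prime_code P (\<lambda>_. 0)) \<le> (weight w a, prime_code P a)"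
    using weight_nonneg[OF w, of a] prime_code_pos[OF P(2), of a] by auto
  show "(weight w (\<lambda>i. a i + c i), prime_code P (\<lambda>i. a i + c i))
      \<le> (weight w (\<lambda>i. b i + c i), prime_code P (\<lambda>i. b i + c i))"
    if "(weight w a, prime_code P a) \<le> (weight w b, prime_code P b)"
    using that prime_code_pos[OF P(2), of c] by (auto simp: weight_add prime_code_add)
qed auto

lemma exists_initial_segment:
  fixes le :: "('d::finite \<Rightarrow> nat) \<Rightarrow> ('d \<Rightarrow> nat) \<Rightarrow> bool"
  assumes to: "term_order le"
  shows "\<exists>S. finite S \<and> card S = k \<and> (\<forall>a\<in>S. \<forall>b. b \<notin> S \<longrightarrow> le a b)"
proof (induction k)
  case 0
  show ?case by (intro exI[of _ "{}"]) simp
next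
  case (Suc k)
  then obtain S where S: "finite S" "card S = k" "\<forall>a\<in>S. \<forall>b. b \<notin> S \<longrightarrow> le a b"
    by blast
  have "infinite (UNIV :: ('d \<Rightarrow> nat) set)"
    using finite_fun_UNIVD2 infinite_UNIV_nat by blast
  then obtain x where "x \<in> - S" using ex_new_if_finite[OF _ S(1)] by auto
  then obtain m where m: "m \<in> - S" "\<And>b. (b, m) \<in> term_order_less le \<Longrightarrow> b \<notin> - S"
    using wfE_min[OF wf_term_order_less[OF to]] by metis
  have "le m b" if "b \<notin> S" for b
    using m(2)[of b] that term_order_linear[OF to, of m b] term_order_refl[OF to, of m]
    by (auto simp: term_order_less_def)
  then show ?case
    using S m(1) by (intro exI[of _ "insert m S"]) auto
qed

lemma sum_le_sum_if_card_le_and_dominated: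
  fixes f :: "'a \<Rightarrow> real"
  assumes S: "finite S" and T: "finite T" and card: "card S \<le> card T"
    and dominated: "\<And>a b. a \<in> S \<Longrightarrow> b \<in> T - S \<Longrightarrow> f a \<le> f b" and nonneg: "\<And>b. 0 \<le> f b"
  shows "sum f S \<le> sum f T"
proof -
  have card_diff: "card (S - T) \<le> card (T - S)"
    using card card_Int_Diff[OF S, of T] card_Int_Diff[OF T, of S] by (simp add: Int_commute)
  have "sum f (S - T) \<le> sum f (T - S)"
  proof (cases "T - S = {}")
    case True
    with card_diff S have "S - T = {}" by simp
    with True show ?thesis by simp
  next
    case False
    define m where "m = Min (f ` (T - S))"
    have "m \<in> f ` (T - S)" unfolding m_def using T False by simp
    then have "f a \<le> m" if "a \<in> S - T" for a
      using dominated that by auto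
    then have "sum f (S - T) \<le> real (card (S - T)) * m"
      by (intro sum_bounded_above) auto
    also have "\<dots> \<le> real (card (T - S)) * m"
      using card_diff nonneg \<open>m \<in> f ` (T - S)\<close> by (intro mult_right_mono) auto
    also have "\<dots> \<le> sum f (T - S)"
      using T by (intro sum_bounded_below) (auto simp: m_def)
    finally show ?thesis .
  qed
  then show ?thesis
    using sum.Int_Diff[OF S, of f T] sum.Int_Diff[OF T, of f S] by (simp add: Int_commute)
qed

lemma aberration_le_if_initial:
  assumes w: "\<forall>i. w i > 0" and S: "finite S" and L: "finite L" and card: "card S \<le> card L"
    and initial: "\<And>a b. a \<in> S \<Longrightarrow> b \<notin> S \<Longrightarrow> weight w a \<le> weight w b"
  shows "aberration n w S \<le> aberration n w L"
proof -
  have "sum (weight w) S \<le> sum (weight w) L"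
    using initial weight_nonneg[OF w]
    by (intro sum_le_sum_if_card_le_and_dominated[OF S L card]) auto
  then show ?thesis
    unfolding aberration_def weight_def[symmetric] by (intro mult_left_mono) auto
qed

lemma aberration_le_if_in_alg_fan:
  fixes D :: "('d::finite \<Rightarrow> real) set"
  assumes w: "\<forall>i. w i > 0" and S: "finite S" and D: "finite D" and card: "card S \<le> card D"
    and initial: "\<And>a b. a \<in> S \<Longrightarrow> b \<notin> S \<Longrightarrow> weight w a \<le> weight w b"
    and fan: "L \<in> alg_fan D"
  shows "aberration n w S \<le> aberration n w L"
proof -
  obtain le where le: "term_order le" "L = std_exps D le"
    using fan unfolding alg_fan_def by blast
  show ?thesis
  proof (rule aberration_le_if_initial[OF w S _ _ initial])
    show "finite L" using finite_std_exps[OF D le(1)] le(2) by simp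
    show "card S \<le> card L" using card_std_exps[OF D le(1)] le(2) card by simp
  qed
qed

theorem theorem4:
  fixes n :: nat and w :: "'d::finite \<Rightarrow> real"
  assumes "n \<ge> 1" and "\<forall>i. w i > 0"
  shows "\<exists>(D :: ('d \<Rightarrow> real) set) L.
           finite D \<and> card D = n \<and> generic D \<and> L \<in> alg_fan D \<and>
           (\<forall>(D' :: ('d \<Rightarrow> real) set) L'.
              finite D' \<and> card D' = n \<and> L' \<in> alg_fan D' \<longrightarrow>
              aberration n w L \<le> aberration n w L')"
proof -
  obtain P :: "'d \<Rightarrow> nat" where P: "inj P" "\<forall>i. prime (P i)"
    using exists_inj_prime by blast
  define le where "le = weighted_order w P"
  have to: "term_order le"
    unfolding le_def using term_order_weighted_order[OF assms(2) P] .
  obtain S where S: "finite S" "card S = n" "\<forall>a\<in>S. \<forall>b. b \<notin> S \<longrightarrow> le a b"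
    using exists_initial_segment[OF to] by blast
  define D where "D = prime_power_point P ` {..<n}"
  have "std_exps D le = S"
    unfolding D_def
    by (rule std_exps_eq_initial_segment[OF to identifiable_prime_power_design[OF P S(1,2)]])
      (use S(3) in blast)
  then have fan: "S \<in> alg_fan D" using to unfolding alg_fan_def by blast
  have initial: "weight w a \<le> weight w b" if "a \<in> S" "b \<notin> S" for a b
    using S(3) that weight_le_if_weighted_order unfolding le_def by blast
  show ?thesis
  proof (intro exI[of _ D] exI[of _ S] conjI allI impI)
    show "finite D" "card D = n" "generic D"
      unfolding D_def using card_prime_power_design[OF P(2)] generic_prime_power_design[OF P]
      by simp_all
  qed (use fan aberration_le_if_in_alg_fan[OF assms(2) S(1) _ _ initial] S(2) in auto)
qed

end
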